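(* Let $\overrightarrow{U}(t)$ be a closed unit timelike dual curve in the 3-dimensional dual Lorentzian space with dual Frenet frame $\{\overrightarrow{U_1},\overrightarrow{U_2},\overrightarrow{U_3}\}$, dual curvature $\kappa=k_1+\varepsilon k_1^*$ and dual torsion $\tau=k_2+\varepsilon k_2^*$, let $\Phi=\varphi+\varepsilon\varphi^*$ be a constant dual number, let $(V_1)$ be the parallel ruled surface of $(U_1)$, corresponding to $\overrightarrow{V_1}=\cosh\Phi\,\overrightarrow{U_1}+\sinh\Phi\,\overrightarrow{U_3}$, and let $(V_3)$ be the closed ruled surface corresponding to $\overrightarrow{V_3}=-\sinh\Phi\,\overrightarrow{U_1}-\cosh\Phi\,\overrightarrow{U_3}$. Then the pitch and the dual angle of pitch of $(V_3)$ are related to the invariants of the surfaces $(U_1)$, $(U_3)$ by $$L_{V_3}=-\sinh\varphi\,L_{u_1}-\cosh\varphi\,L_{u_3}+\varphi^*\left(\cosh\varphi\,\lambda_{u_1}+\sinh\varphi\,\lambda_{u_3}\right),$$ $$\Lambda_{V_3}=-\sinh\Phi\,\Lambda_{U_1}-\cosh\Phi\,\Lambda_{U_3}.$$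
   Context: Dual numbers are $\lambda+\varepsilon\lambda^*$ with $\lambda,\lambda^*\in\mathbb{R}$ and $\varepsilon^2=0$; dual vectors are $\overrightarrow{A}=\overrightarrow{a}+\varepsilon\overrightarrow{a}^*$ with $\overrightarrow{a},\overrightarrow{a}^*\in\mathbb{R}^3$. The Lorentzian inner product on $\mathbb{R}^3$ is $\langle a,b\rangle=-a_1b_1+a_2b_2+a_3b_3$, extended to dual vectors by $\langle \overrightarrow{A},\overrightarrow{B}\rangle=\langle\overrightarrow{a},\overrightarrow{b}\rangle+\varepsilon(\langle\overrightarrow{a},\overrightarrow{b}^*\rangle+\langle\overrightarrow{a}^*,\overrightarrow{b}\rangle)$. For a dual number $\Phi=\varphi+\varepsilon\varphi^*$: $\sinh\Phi=\sinh\varphi+\varepsilon\varphi^*\cosh\varphi$, $\cosh\Phi=\cosh\varphi+\varepsilon\varphi^*\sinh\varphi$. The closed unit timelike dual curve $\overrightarrow{U}(t)$ (integrals $\oint$ over one closed period of $t$) has Frenet frame $\overrightarrow{U_1}=\overrightarrow{U}$ (timelike), $\overrightarrow{U_2},\overrightarrow{U_3}$ (spacelike), mutually orthogonal unit dual vectors with $\overrightarrow{U_i}=\overrightarrow{u_i}+\varepsilon\overrightarrow{u_i}^*$, satisfying $\overrightarrow{U_1}'=\kappa\overrightarrow{U_2}$, $\overrightarrow{U_2}'=\kappa\overrightarrow{U_1}-\tau\overrightarrow{U_3}$, $\overrightarrow{U_3}'=\tau\overrightarrow{U_2}$. Set $\overrightarrow{V_2}=\overrightarrow{U_2}$, $P=p+\varepsilon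 p^*=\kappa\cosh\Phi+\tau\sinh\Phi$, $Q=q+\varepsilon q^*=-\kappa\sinh\Phi-\tau\cosh\Phi$; write $\overrightarrow{V_i}=\overrightarrow{v_i}+\varepsilon\overrightarrow{v_i}^*$. The dual Steiner vector is taken (frame vectors written outside the integrals) as $\overrightarrow{D}=\overrightarrow{d}+\varepsilon\overrightarrow{d}^*=\overrightarrow{U_1}\oint\tau\,dt-\overrightarrow{U_3}\oint\kappa\,dt=-\overrightarrow{V_1}\oint Q\,dt+\overrightarrow{V_3}\oint P\,dt$; correspondingly $\overrightarrow{d}=\overrightarrow{u_1}\oint k_2dt-\overrightarrow{u_3}\oint k_1dt$, $\overrightarrow{d}^*=\overrightarrow{u_1}^*\oint k_2dt+\overrightarrow{u_1}\oint k_2^*dt-\overrightarrow{u_3}^*\oint k_1dt-\overrightarrow{u_3}\oint k_1^*dt$ (equivalently $\overrightarrow{d}=-\overrightarrow{v_1}\oint q\,dt+\overrightarrow{v_3}\oint p\,dt$, $\overrightarrow{d}^*=-\overrightarrow{v_1}\oint q^*dt-\overrightarrow{v_1}^*\oint q\,dt+\overrightarrow{v_3}\oint p^*dt+\overrightarrow{v_3}^*\oint p\,dt$). For the closed ruled surface corresponding to a unit dual curve $\overrightarrow{X}=\overrightarrow{x}+\varepsilon\overrightarrow{x}^*$: pitch $L_X=\langle\overrightarrow{d},\overrightarrow{x}^*\rangle+\langle\overrightarrow{d}^*,\overrightarrow{x}\rangle$, dual angle of pitch $\Lambda_X=-\langle\overrightarrow{D},\overrightarrow{X}\rangle$. Here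 $L_{u_1},L_{u_3}$ are the pitches of the surfaces of $\overrightarrow{U_1},\overrightarrow{U_3}$ (with these conventions $L_{u_1}=-\oint k_2^*dt$, $L_{u_3}=-\oint k_1^*dt$), $\Lambda_{U_1}=\oint\tau\,dt$, $\Lambda_{U_3}=\oint\kappa\,dt$ are their dual angles of pitch, and $\lambda_{u_1}=\oint k_2\,dt$, $\lambda_{u_3}=\oint k_1\,dt$ are the real parts of $\Lambda_{U_1},\Lambda_{U_3}$. *)

theory Defs
  imports "HOL-Analysis.Analysis"
begin

text \<open>Dual numbers lambda + eps lambda* are represented as pairs (lambda, lambda*),
dual vectors a + eps a* as pairs (a, a*) of vectors in R^3.\<close>

type_synonym dnum = "real \<times> real"
type_synonym dvec = "(real^3) \<times> (real^3)"

definition dadd :: "dnum \<Rightarrow> dnum \<Rightarrow> dnum" where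
  "dadd x y = (fst x + fst y, snd x + snd y)"

definition dneg :: "dnum \<Rightarrow> dnum" where
  "dneg x = (- fst x, - snd x)"

definition dmul :: "dnum \<Rightarrow> dnum \<Rightarrow> dnum" where
  "dmul x y = (fst x * fst y, fst x * snd y + snd x * fst y)"

definition dsinh :: "dnum \<Rightarrow> dnum" where
  "dsinh x = (sinh (fst x), snd x * cosh (fst x))"

definition dcosh :: "dnum \<Rightarrow> dnum" where
  "dcosh x = (cosh (fst x), snd x * sinh (fst x))"

definition linner :: "real^3 \<Rightarrow> real^3 \<Rightarrow> real" where
  "linner a b = - a$1 * b$1 + a$2 * b$2 + a$3 * b$3"

definition dinner :: "dvec \<Rightarrow> dvec \<Rightarrow> dnum" where
  "dinner A B = (linner (fst A) (fst B), linner (fst A) (snd B) + linner (snd A) (fst B))"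

definition vadd :: "dvec \<Rightarrow> dvec \<Rightarrow> dvec" where
  "vadd A B = (fst A + fst B, snd A + snd B)"

definition vneg :: "dvec \<Rightarrow> dvec" where
  "vneg A = (- fst A, - snd A)"

definition dscale :: "dnum \<Rightarrow> dvec \<Rightarrow> dvec" where
  "dscale x A = (fst x *\<^sub>R fst A, fst x *\<^sub>R snd A + snd x *\<^sub>R fst A)"

definition dvec_deriv :: "(real \<Rightarrow> dvec) \<Rightarrow> dvec \<Rightarrow> real \<Rightarrow> bool" where
  "dvec_deriv U U' t \<longleftrightarrow>
     ((\<lambda>s. fst (U s)) has_vector_derivative fst U') (at t) \<and>
     ((\<lambda>s. snd (U s)) has_vector_derivative snd U') (at t)"

definition doint :: "real \<Rightarrow> (real \<Rightarrow> dnum) \<Rightarrow> dnum" where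
  "doint T f = (integral {0..T} (\<lambda>t. fst (f t)), integral {0..T} (\<lambda>t. snd (f t)))"

definition pitch :: "dvec \<Rightarrow> dvec \<Rightarrow> real" where
  "pitch D X = linner (fst D) (snd X) + linner (snd D) (fst X)"

definition dangle_pitch :: "dvec \<Rightarrow> dvec \<Rightarrow> dnum" where
  "dangle_pitch D X = dneg (dinner D X)"

text \<open>Dual Steiner vector with frame vectors (at parameter t) outside the integrals:
  D = U1 * oint tau - U3 * oint kappa.\<close>
definition steiner :: "real \<Rightarrow> (real \<Rightarrow> dvec) \<Rightarrow> (real \<Rightarrow> dvec) \<Rightarrow> (real \<Rightarrow> dnum) \<Rightarrow> (real \<Rightarrow> dnum) \<Rightarrow> real \<Rightarrow> dvec" where
  "steiner T U1 U3 \<kappa> \<tau> t = vadd (dscale (doint T \<tau>) (U1 t)) (vneg (dscale (doint T \<kappa>) (U3 t)))"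

definition closed_timelike_frenet ::
  "real \<Rightarrow> (real \<Rightarrow> dvec) \<Rightarrow> (real \<Rightarrow> dvec) \<Rightarrow> (real \<Rightarrow> dvec) \<Rightarrow> (real \<Rightarrow> dnum) \<Rightarrow> (real \<Rightarrow> dnum) \<Rightarrow> bool" where
  "closed_timelike_frenet T U1 U2 U3 \<kappa> \<tau> \<longleftrightarrow>
     T > 0 \<and>
     (\<forall>t. U1 (t + T) = U1 t \<and> U2 (t + T) = U2 t \<and> U3 (t + T) = U3 t
          \<and> \<kappa> (t + T) = \<kappa> t \<and> \<tau> (t + T) = \<tau> t) \<and>
     continuous_on UNIV (\<lambda>t. fst (\<kappa> t)) \<and> continuous_on UNIV (\<lambda>t. snd (\<kappa> t)) \<and>
     continuous_on UNIV (\<lambda>t. fst (\<tau> t)) \<and> continuous_on UNIV (\<lambda>t. snd (\<tau> t)) \<and>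
     (\<forall>t. dinner (U1 t) (U1 t) = (-1, 0) \<and> dinner (U2 t) (U2 t) = (1, 0) \<and>
          dinner (U3 t) (U3 t) = (1, 0) \<and> dinner (U1 t) (U2 t) = (0, 0) \<and>
          dinner (U1 t) (U3 t) = (0, 0) \<and> dinner (U2 t) (U3 t) = (0, 0)) \<and>
     (\<forall>t. dvec_deriv U1 (dscale (\<kappa> t) (U2 t)) t \<and>
          dvec_deriv U2 (vadd (dscale (\<kappa> t) (U1 t)) (vneg (dscale (\<tau> t) (U3 t)))) t \<and>
          dvec_deriv U3 (dscale (\<tau> t) (U2 t)) t)"

end

theory Submission
  imports Defs
begin

text \<open>The dual angle of pitch \<open>-\<langle>D, X\<rangle>\<close> is linear in \<open>X\<close> over the dual numbers, and the
pitch is minus its dual part. Since \<open>V\<^sub>3\<close> is a dual linear combination of \<open>U\<^sub>1\<close> and \<open>U\<^sub>3\<close>,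
the formula for \<open>\<Lambda>\<^sub>V\<^sub>3\<close> is immediate, and taking dual parts of
\<open>\<Lambda>\<^sub>V\<^sub>3 = -sinh \<Phi> \<Lambda>\<^sub>U\<^sub>1 - cosh \<Phi> \<Lambda>\<^sub>U\<^sub>3\<close> with the product rule
\<open>(a + \<epsilon>a\<^sup>*)(b + \<epsilon>b\<^sup>*) = ab + \<epsilon>(ab\<^sup>* + a\<^sup>*b)\<close> gives the formula for \<open>L\<^sub>V\<^sub>3\<close>.
Neither the Frenet equations nor the particular Steiner vector enter: both identities hold
for every dual vector \<open>D\<close>.\<close>

lemma linner_add_right: "linner a (b + c) = linner a b + linner a c"
  by (simp add: linner_def algebra_simps)

lemma linner_uminus_right: "linner a (- b) = - linner a b"
  by (simp add: linner_def)

lemma linner_scaleR_right: "linner a (r *\<^sub>R b) = r * linner a b"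
  by (simp add: linner_def algebra_simps)

lemma dinner_vadd_right: "dinner D (vadd X Y) = dadd (dinner D X) (dinner D Y)"
  by (simp add: dinner_def vadd_def dadd_def linner_add_right)

lemma dinner_vneg_right: "dinner D (vneg X) = dneg (dinner D X)"
  by (simp add: dinner_def vneg_def dneg_def linner_uminus_right)

lemma dinner_dscale_right: "dinner D (dscale a X) = dmul a (dinner D X)"
  by (simp add: dinner_def dscale_def dmul_def linner_add_right linner_scaleR_right
      algebra_simps)

lemma dneg_dadd: "dneg (dadd x y) = dadd (dneg x) (dneg y)"
  by (simp add: dneg_def dadd_def)

lemma dneg_dmul_right: "dneg (dmul a x) = dmul a (dneg x)"
  by (simp add: dneg_def dmul_def)

lemma dangle_pitch_vadd:
  "dangle_pitch D (vadd X Y) = dadd (dangle_pitch D X) (dangle_pitch D Y)"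
  by (simp add: dangle_pitch_def dinner_vadd_right dneg_dadd)

lemma dangle_pitch_vneg: "dangle_pitch D (vneg X) = dneg (dangle_pitch D X)"
  by (simp add: dangle_pitch_def dinner_vneg_right)

lemma dangle_pitch_dscale: "dangle_pitch D (dscale a X) = dmul a (dangle_pitch D X)"
  by (simp add: dangle_pitch_def dinner_dscale_right dneg_dmul_right)

lemma pitch_eq_neg_snd_dangle_pitch: "pitch D X = - snd (dangle_pitch D X)"
  by (simp add: pitch_def dangle_pitch_def dinner_def dneg_def)

theorem corollary2p2:
  fixes T :: real and U1 U2 U3 :: "real \<Rightarrow> dvec" and \<kappa> \<tau> :: "real \<Rightarrow> dnum"
    and \<Phi> :: dnum and t :: real
  assumes "closed_timelike_frenet T U1 U2 U3 \<kappa> \<tau>"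
  defines "D \<equiv> steiner T U1 U3 \<kappa> \<tau> t"
    and "V3 \<equiv> vadd (vneg (dscale (dsinh \<Phi>) (U1 t))) (vneg (dscale (dcosh \<Phi>) (U3 t)))"
  shows "pitch D V3 =
           - sinh (fst \<Phi>) * pitch D (U1 t) - cosh (fst \<Phi>) * pitch D (U3 t)
           + snd \<Phi> * (cosh (fst \<Phi>) * fst (dangle_pitch D (U1 t))
                      + sinh (fst \<Phi>) * fst (dangle_pitch D (U3 t))) \<and>
         dangle_pitch D V3 =
           dadd (dneg (dmul (dsinh \<Phi>) (dangle_pitch D (U1 t))))
                (dneg (dmul (dcosh \<Phi>) (dangle_pitch D (U3 t))))"
proof
  show "dangle_pitch D V3 =
      dadd (dneg (dmul (dsinh \<Phi>) (dangle_pitch D (U1 t))))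
           (dneg (dmul (dcosh \<Phi>) (dangle_pitch D (U3 t))))"
    unfolding V3_def by (simp add: dangle_pitch_vadd dangle_pitch_vneg dangle_pitch_dscale)
  then show "pitch D V3 =
      - sinh (fst \<Phi>) * pitch D (U1 t) - cosh (fst \<Phi>) * pitch D (U3 t)
      + snd \<Phi> * (cosh (fst \<Phi>) * fst (dangle_pitch D (U1 t))
                 + sinh (fst \<Phi>) * fst (dangle_pitch D (U3 t)))"
    by (simp add: pitch_eq_neg_snd_dangle_pitch dadd_def dneg_def dmul_def dsinh_def
        dcosh_def algebra_simps)
qed

end
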